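(* Let $m\ge 1$ and let $\pi_1,\dots,\pi_m$ be positive integers with $n=\pi_1+\dots+\pi_m$. Let $\bm{A}=\mathrm{blkdiag}(\bm{A}^{(1)},\dots,\bm{A}^{(m)})\in\mathbb{R}^{n\times n}$ and $\bm{B}=\mathrm{blkdiag}(\bm{e}^{\pi_1}_{\pi_1},\dots,\bm{e}^{\pi_m}_{\pi_m})\in\mathbb{R}^{n\times m}$ be as described in the context, and for real numbers $s<t$ let $$\bm{M}_{ts}=\int_s^t e^{\bm{A}(t-\tau)}\bm{B}\bm{B}^\top e^{\bm{A}^\top(t-\tau)}\,d\tau$$ be the controllability Gramian on $[s,t]$. Then $\bm{M}_{ts}=\mathrm{blkdiag}(\bm{M}^{(1)}_{ts},\dots,\bm{M}^{(m)}_{ts})$ with $\bm{M}^{(k)}_{ts}\in\mathbb{R}^{\pi_k\times\pi_k}$, and: (i) $\displaystyle \det(\bm{M}_{ts})=\prod_{k=1}^m\Big\{(t-s)^{\pi_k^2}\prod_{r=1}^{\pi_k}\frac{\Gamma(r)}{\Gamma(\pi_k+r)}\Big\}$; (ii) $\bm{M}_{ts}^{-1}=\mathrm{blkdiag}\big((\bm{M}^{(1)}_{ts})^{-1},\dots,(\bm{M}^{(m)}_{ts})^{-1}\big)$, where for each $k\in\{1,\dots,m\}$ and $i,j\in\{1,\dots,\pi_k\}$, $$\Big[(\bm{M}^{(k)}_{ts})^{-1}\Big]_{ij}=\frac{(\pi_k-i)!\,(\pi_k-j)!}{(2\pi_k-i-j+1)\,(t-s)^{2\pi_k-i-j+1}}\cdot\frac{\prod_{r=1}^{\pi_k}(2\pi_k-i-r+1)(2\pi_k-j-r+1)}{\Big(\prod_{r=1,\,r\ne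 i}^{\pi_k}(r-i)\Big)\Big(\prod_{r=1,\,r\ne j}^{\pi_k}(r-j)\Big)}.$$
   Context: $\bm{e}^d_i$ denotes the $i$-th standard basis vector of $\mathbb{R}^d$, and $\bm{0}$ a zero column vector. For each $k$, $\bm{A}^{(k)}=[\bm{0}\mid \bm{e}^{\pi_k}_1\mid \bm{e}^{\pi_k}_2\mid\cdots\mid \bm{e}^{\pi_k}_{\pi_k-1}]\in\mathbb{R}^{\pi_k\times\pi_k}$ (i.e., the nilpotent shift matrix with ones on the superdiagonal; for $\pi_k=1$ it is the $1\times1$ zero matrix). $\mathrm{blkdiag}$ denotes the block-diagonal matrix with the given diagonal blocks. The pair $(\bm{A},\bm{B})$ is the Brunovsky normal form $\dot{\bm z}=\bm A\bm z+\bm B\tilde{\bm u}$ with vector relative degree $(\pi_1,\dots,\pi_m)$. $\Gamma$ is the Gamma function, $\Gamma(n)=(n-1)!$ for positive integers $n$. *)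

theory Defs
  imports "HOL-Analysis.Analysis" "Jordan_Normal_Form.Determinant"
begin

definition shift_block :: "nat \<Rightarrow> real mat" where
  "shift_block p = mat p p (\<lambda>(i,j). if j = i + 1 then 1 else 0)"

definition last_basis_col :: "nat \<Rightarrow> real mat" where
  "last_basis_col p = mat p 1 (\<lambda>(i,j). if i = p - 1 then 1 else 0)"

definition brun_A :: "nat list \<Rightarrow> real mat" where
  "brun_A ps = diag_block_mat (map shift_block ps)"

definition brun_B :: "nat list \<Rightarrow> real mat" where
  "brun_B ps = diag_block_mat (map last_basis_col ps)"

definition mat_exp :: "real mat \<Rightarrow> real mat" where
  "mat_exp M = mat (dim_row M) (dim_col M)
      (\<lambda>(i,j). \<Sum>k. (M ^\<^sub>m k) $$ (i,j) / fact k)"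

definition gramian :: "real mat \<Rightarrow> real mat \<Rightarrow> real \<Rightarrow> real \<Rightarrow> real mat" where
  "gramian A B t s = mat (dim_row A) (dim_row A)
      (\<lambda>(i,j). integral {s..t} (\<lambda>\<tau>.
         (mat_exp ((t - \<tau>) \<cdot>\<^sub>m A) * B * transpose_mat B
            * mat_exp ((t - \<tau>) \<cdot>\<^sub>m transpose_mat A)) $$ (i,j)))"

definition inv_block :: "nat \<Rightarrow> real \<Rightarrow> real \<Rightarrow> real mat" where
  "inv_block p t s = mat p p (\<lambda>(a,b). let i = a + 1; j = b + 1 in
     (fact (p - i) * fact (p - j)
        / (real (2*p - i - j + 1) * (t - s) ^ (2*p - i - j + 1)))
     * ((\<Prod>r=1..p. real (2*p - i - r + 1) * real (2*p - j - r + 1))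
        / ((\<Prod>r\<in>{1..p} - {i}. real r - real i) * (\<Prod>r\<in>{1..p} - {j}. real r - real j))))"

end

theory Submission
  imports Defs
begin

text \<open>On a Brunovsky block of size \<open>p\<close> the column \<open>e\<^bsup>A(t-\<tau>)\<^esup> B\<close> has the entries
  \<open>(t - \<tau>)\<^sup>x / x!\<close>, \<open>x = p - 1 - i\<close>, so with \<open>T = t - s\<close> the Gramian block has the entries
  \<open>T\<^bsup>x+y+1\<^esup> / ((x + y + 1) x! y!)\<close>: the Hilbert matrix \<open>1 / (x + y + 1)\<close>, scaled on both
  sides by a diagonal matrix. Its inverse therefore comes from the classical inverse of the Hilbert
  matrix, which is a partial fraction expansion: with suitable weights \<open>w\<^sub>c\<close>,
  \<open>\<Sum>\<^sub>c w\<^sub>c / ((x + c + 1) (X + c + 1)) = \<Prod>\<^sub>u\<^sub>\<noteq>\<^sub>x (X - u) / \<Prod>\<^sub>c (X + c + 1)\<close>,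
  and evaluating at \<open>X = y\<close> gives \<open>\<delta>\<^sub>x\<^sub>y / w\<^sub>x\<close>. Deleting the first row and column of the
  block of size \<open>p + 1\<close> leaves the block of size \<open>p\<close>, so by the adjugate formula the corner
  entry of the inverse is the ratio of consecutive determinants, which yields the determinant by
  induction. Since \<open>A\<close> and \<open>B\<close> are block diagonal, all of this holds blockwise.\<close>

section \<open>Partial fractions and the inverse Hilbert matrix\<close>

lemma lagrange_basis_at_node:
  fixes z :: "nat \<Rightarrow> real"
  assumes inj: "inj_on z {..<n}" and c: "c < n" and d: "d < n"
  shows "(\<Prod>u\<in>{..<n}-{c}. (z d - z u) / (z c - z u)) = (if c = d then 1 else 0)"
proof (cases "c = d")
  case True
  have "z c \<noteq> z u" if "u \<in> {..<n}-{c}" for u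
    using inj that c by (auto dest: inj_onD)
  then show ?thesis using True by (simp add: prod.neutral)
next
  case False
  have "(\<Prod>u\<in>{..<n}-{c}. (z d - z u) / (z c - z u)) = 0"
    by (rule prod_zero) (use False d in \<open>auto intro!: bexI[of _ d]\<close>)
  then show ?thesis using False by simp
qed

lemma lagrange_interpolation:
  fixes q :: "real poly" and z :: "nat \<Rightarrow> real"
  assumes inj: "inj_on z {..<n}" and deg: "degree q < n"
  shows "poly q x = (\<Sum>c<n. poly q (z c) * (\<Prod>u\<in>{..<n}-{c}. (x - z u) / (z c - z u)))"
proof -
  define L where "L = (\<Sum>c<n. Polynomial.smult (poly q (z c) / (\<Prod>u\<in>{..<n}-{c}. z c - z u))
                                (\<Prod>u\<in>{..<n}-{c}. [:- z u, 1:]))"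
  have deg_L: "degree L \<le> n - 1"
    unfolding L_def
  proof (intro degree_sum_le)
    fix c assume c: "c \<in> {..<n}"
    have "degree (\<Prod>u\<in>{..<n}-{c}. [:- z u, 1:]) \<le> sum (degree \<circ> (\<lambda>u. [:- z u, 1:])) ({..<n}-{c})"
      by (rule degree_prod_sum_le) auto
    also have "\<dots> = n - 1" using c by simp
    finally show "degree (Polynomial.smult (poly q (z c) / (\<Prod>u\<in>{..<n}-{c}. z c - z u))
        (\<Prod>u\<in>{..<n}-{c}. [:- z u, 1:])) \<le> n - 1"
      using degree_smult_le order_trans by blast
  qed simp
  have poly_L: "poly L y = (\<Sum>c<n. poly q (z c) * (\<Prod>u\<in>{..<n}-{c}. (y - z u) / (z c - z u)))" for y
    unfolding L_def poly_sum poly_smult poly_prod by (intro sum.cong refl) (simp add: prod_dividef)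
  have "q = L"
  proof (rule poly_eqI_degree[of "z ` {..<n}"])
    fix y assume "y \<in> z ` {..<n}"
    then obtain d where d: "d < n" "y = z d" by auto
    have "poly L (z d) = (\<Sum>c<n. if c = d then poly q (z d) else 0)"
      unfolding poly_L using lagrange_basis_at_node[OF inj _ d(1)] by (intro sum.cong) auto
    then show "poly q y = poly L y" using d by simp
  next
    have "card (z ` {..<n}) = n" using inj card_image by fastforce
    then show "degree q < card (z ` {..<n})" "degree L < card (z ` {..<n})"
      using deg deg_L by auto
  qed
  from poly_L[of x] show ?thesis unfolding \<open>q = L\<close>[symmetric] .
qed

lemma partial_fraction_expansion:
  fixes q :: "real poly" and z :: "nat \<Rightarrow> real"
  assumes inj: "inj_on z {..<n}" and deg: "degree q < n" and X: "\<forall>c<n. X \<noteq> z c"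
  shows "poly q X / (\<Prod>c<n. X - z c)
       = (\<Sum>c<n. poly q (z c) / (\<Prod>u\<in>{..<n}-{c}. z c - z u) / (X - z c))"
  unfolding lagrange_interpolation[OF inj deg, of X] sum_divide_distrib
proof (intro sum.cong refl)
  fix c assume c: "c \<in> {..<n}"
  have split: "(\<Prod>u<n. X - z u) = (X - z c) * (\<Prod>u\<in>{..<n}-{c}. X - z u)"
    using c by (subst prod.remove[of _ c]) auto
  have "(\<Prod>u\<in>{..<n}-{c}. X - z u) \<noteq> 0" using X by auto
  moreover have "(\<Prod>u\<in>{..<n}-{c}. z c - z u) \<noteq> 0"
    using inj c by (auto dest: inj_onD)
  moreover have "X - z c \<noteq> 0" using X c by auto
  ultimately show "poly q (z c) * (\<Prod>u\<in>{..<n}-{c}. (X - z u) / (z c - z u)) / (\<Prod>u<n. X - z u)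
      = poly q (z c) / (\<Prod>u\<in>{..<n}-{c}. z c - z u) / (X - z c)"
    unfolding split prod_dividef by (simp add: field_simps)
qed

lemma prod_lessThan_add_eq_fact: "(\<Prod>u<p. real c + 1 + real u) = fact (c + p) / fact c"
proof (induction p)
  case (Suc p)
  then show ?case by (simp add: algebra_simps)
qed simp

lemma prod_lessThan_diff_self:
  assumes "c < p"
  shows "(\<Prod>u\<in>{..<p}-{c}. real u - real c) = (-1)^c * fact c * fact (p - 1 - c)"
  using assms
proof (induction p)
  case 0
  then show ?case by simp
next
  case (Suc p)
  show ?case
  proof (cases "c = p")
    case True
    have "(\<Prod>u<c. real u - real c) = (\<Prod>u<c. - real (c - u))"
      by (intro prod.cong refl) (auto simp: of_nat_diff)
    also have "\<dots> = (-1)^c * (\<Prod>u<c. real (c - u))"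
      by (simp only: prod_uminus card_lessThan)
    also have "(\<Prod>u<c. real (c - u)) = fact c"
      by (simp only: fact_prod_rev atLeast0LessThan of_nat_prod)
    finally show ?thesis using True by (simp add: lessThan_Suc)
  next
    case False
    then have "c < p" using Suc.prems by simp
    then have "{..<Suc p} - {c} = insert p ({..<p} - {c})" by auto
    then have "(\<Prod>u\<in>{..<Suc p}-{c}. real u - real c)
             = real (Suc (p - 1 - c)) * ((-1)^c * fact c * fact (p - 1 - c))"
      using Suc.IH \<open>c < p\<close> by (simp add: of_nat_diff)
    moreover have "Suc p - 1 - c = Suc (p - 1 - c)" using \<open>c < p\<close> by simp
    ultimately show ?thesis by (simp add: algebra_simps)
  qed
qed

lemma prod_lessThan_self_diff:
  assumes "c < p"
  shows "(\<Prod>u\<in>{..<p}-{c}. real c - real u) = (-1)^(p - 1 - c) * fact c * fact (p - 1 - c)"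
proof -
  have "(\<Prod>u\<in>{..<p}-{c}. real c - real u) = (\<Prod>u\<in>{..<p}-{p - 1 - c}. real u - real (p - 1 - c))"
    using assms
    by (intro prod.reindex_bij_witness[of _ "\<lambda>u. p - 1 - u" "\<lambda>u. p - 1 - u"]) (auto simp: of_nat_diff)
  also have "\<dots> = (-1)^(p - 1 - c) * fact c * fact (p - 1 - c)"
    using prod_lessThan_diff_self[of "p - 1 - c" p] assms by (simp add: ac_simps)
  finally show ?thesis .
qed

text \<open>The inverse of the Hilbert matrix \<open>(1 / (x + y + 1))\<close> of order \<open>p\<close> has the entries
  \<open>w x * w y / (x + y + 1)\<close> with these weights \<open>w\<close>.\<close>
definition hilbert_inv_weight :: "nat \<Rightarrow> nat \<Rightarrow> real" where
  "hilbert_inv_weight p c = fact (c + p) / ((-1)^(p - 1 - c) * fact c ^ 2 * fact (p - 1 - c))"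

lemma hilbert_inv_weight_nonzero: "hilbert_inv_weight p c \<noteq> 0"
  by (simp add: hilbert_inv_weight_def)

lemma sum_hilbert_inv_weight_eq_rational:
  assumes x: "x < p" and X: "X \<ge> 0"
  shows "(\<Sum>c<p. hilbert_inv_weight p c / ((real x + real c + 1) * (X + real c + 1)))
       = (\<Prod>u\<in>{..<p}-{x}. X - real u) / (\<Prod>c<p. X + real c + 1)"
proof -
  define q where "q = (\<Prod>u\<in>{..<p}-{x}. [:- real u, 1:])"
  define z where "z c = - real c - 1" for c
  have poly_q: "poly q Y = (\<Prod>u\<in>{..<p}-{x}. Y - real u)" for Y
    unfolding q_def by (simp add: poly_prod)
  have "degree q \<le> p - 1"
    using degree_prod_sum_le[of "{..<p}-{x}" "\<lambda>u. [:- real u, 1:]"] x by (simp add: q_def)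
  then have deg_q: "degree q < p" using x by simp
  have inj: "inj_on z {..<p}" by (auto intro: inj_onI simp: z_def)
  have residue: "poly q (z c) / (\<Prod>u\<in>{..<p}-{c}. z c - z u)
      = hilbert_inv_weight p c / (real x + real c + 1)" if c: "c < p" for c
  proof -
    define P where "P = (\<Prod>u\<in>{..<p}-{x}. real c + 1 + real u)"
    have card: "card ({..<p}-{a}) = p - 1" if "a < p" for a using that by simp
    have "poly q (z c) = (\<Prod>u\<in>{..<p}-{x}. - (real c + 1 + real u))"
      unfolding poly_q z_def by (intro prod.cong refl) simp
    also have "\<dots> = (-1)^(p - 1) * P"
      by (simp only: prod_uminus card[OF x] P_def)
    finally have num: "poly q (z c) = (-1)^(p - 1) * P" .
    have "(\<Prod>u\<in>{..<p}-{c}. z c - z u) = (\<Prod>u\<in>{..<p}-{c}. - (real c - real u))"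
      unfolding z_def by (intro prod.cong refl) simp
    also have "\<dots> = (-1)^(p - 1) * (\<Prod>u\<in>{..<p}-{c}. real c - real u)"
      by (simp only: prod_uminus card[OF c])
    finally have den: "(\<Prod>u\<in>{..<p}-{c}. z c - z u) = (-1)^(p - 1) * (\<Prod>u\<in>{..<p}-{c}. real c - real u)" .
    have "fact (c + p) / fact c = (real c + 1 + real x) * P"
      unfolding P_def prod_lessThan_add_eq_fact[symmetric] using x by (subst prod.remove[of _ x]) auto
    then have P: "P = fact (c + p) / fact c / (real c + 1 + real x)"
      by (simp add: add_nonneg_eq_0_iff)
    have "poly q (z c) / (\<Prod>u\<in>{..<p}-{c}. z c - z u) = P / (\<Prod>u\<in>{..<p}-{c}. real c - real u)"
      unfolding num den by simp
    also have "\<dots> = hilbert_inv_weight p c / (real x + real c + 1)"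
      unfolding P prod_lessThan_self_diff[OF c] hilbert_inv_weight_def
      by (simp add: divide_divide_eq_left power2_eq_square ac_simps)
    finally show ?thesis .
  qed
  have "(\<Prod>u\<in>{..<p}-{x}. X - real u) / (\<Prod>c<p. X + real c + 1) = poly q X / (\<Prod>c<p. X - z c)"
    by (simp add: poly_q z_def algebra_simps)
  also have "\<dots> = (\<Sum>c<p. poly q (z c) / (\<Prod>u\<in>{..<p}-{c}. z c - z u) / (X - z c))"
    by (rule partial_fraction_expansion[OF inj deg_q]) (use X in \<open>auto simp: z_def\<close>)
  also have "\<dots> = (\<Sum>c<p. hilbert_inv_weight p c / ((real x + real c + 1) * (X + real c + 1)))"
  proof (intro sum.cong refl)
    fix c assume "c \<in> {..<p}"
    moreover have "X - z c = X + real c + 1" by (simp add: z_def)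
    ultimately show "poly q (z c) / (\<Prod>u\<in>{..<p}-{c}. z c - z u) / (X - z c)
        = hilbert_inv_weight p c / ((real x + real c + 1) * (X + real c + 1))"
      by (simp add: residue)
  qed
  finally show ?thesis ..
qed

lemma sum_hilbert_inv_weight:
  assumes x: "x < p" and y: "y < p"
  shows "(\<Sum>c<p. hilbert_inv_weight p c / ((real x + real c + 1) * (real y + real c + 1)))
       = (if x = y then 1 / hilbert_inv_weight p x else 0)"
  unfolding sum_hilbert_inv_weight_eq_rational[OF x of_nat_0_le_iff]
proof (cases "x = y")
  case True
  have "(\<Prod>c<p. real x + real c + 1) = fact (x + p) / fact x"
    using prod_lessThan_add_eq_fact[of x p] by (simp add: algebra_simps)
  then show "(\<Prod>u\<in>{..<p}-{x}. real y - real u) / (\<Prod>c<p. real y + real c + 1)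
      = (if x = y then 1 / hilbert_inv_weight p x else 0)"
    using True prod_lessThan_self_diff[OF x]
    by (simp add: hilbert_inv_weight_def power2_eq_square)
next
  case False
  have "(\<Prod>u\<in>{..<p}-{x}. real y - real u) = 0"
    by (rule prod_zero) (use False y in \<open>auto intro!: bexI[of _ y]\<close>)
  then show "(\<Prod>u\<in>{..<p}-{x}. real y - real u) / (\<Prod>c<p. real y + real c + 1)
      = (if x = y then 1 / hilbert_inv_weight p x else 0)"
    using False by simp
qed

lemma adj_mat_eq_det_smult_inverse:
  fixes A :: "'a :: field mat"
  assumes A: "A \<in> carrier_mat n n" and B: "B \<in> carrier_mat n n" and AB: "A * B = 1\<^sub>m n"
  shows "adj_mat A = Determinant.det A \<cdot>\<^sub>m B"
proof -
  have adj: "adj_mat A \<in> carrier_mat n n" by (rule adj_mat(1)[OF A])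
  then have "adj_mat A = adj_mat A * (A * B)" by (simp add: AB)
  also have "\<dots> = (adj_mat A * A) * B" using adj A B by simp
  also have "\<dots> = Determinant.det A \<cdot>\<^sub>m B"
    using B by (simp add: adj_mat(3)[OF A] mult_smult_assoc_mat[OF one_carrier_mat B])
  finally show ?thesis .
qed

lemma pow_mat_Suc_left:
  assumes A: "A \<in> carrier_mat n n"
  shows "A ^\<^sub>m Suc k = A * A ^\<^sub>m k"
proof (induction k)
  case (Suc k)
  have "A ^\<^sub>m Suc (Suc k) = A ^\<^sub>m Suc k * A" by simp
  also have "\<dots> = A * A ^\<^sub>m k * A" by (simp only: Suc.IH)
  also have "\<dots> = A * (A ^\<^sub>m k * A)" by (rule assoc_mult_mat[OF A pow_carrier_mat[OF A] A])
  finally show ?case by simp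
qed (use A in simp)

lemma transpose_pow_mat:
  fixes A :: "'a :: comm_semiring_1 mat"
  assumes A: "A \<in> carrier_mat n n"
  shows "transpose_mat (A ^\<^sub>m k) = transpose_mat A ^\<^sub>m k"
proof (induction k)
  case (Suc k)
  have "transpose_mat (A ^\<^sub>m Suc k) = transpose_mat A * transpose_mat (A ^\<^sub>m k)"
    using transpose_mult[OF pow_carrier_mat[OF A] A] by simp
  also have "\<dots> = transpose_mat A * transpose_mat A ^\<^sub>m k" by (simp only: Suc.IH)
  also have "\<dots> = transpose_mat A ^\<^sub>m Suc k"
    using A by (intro pow_mat_Suc_left[symmetric]) simp
  finally show ?case .
qed (use A in simp)

lemma transpose_smult_mat: "transpose_mat (c \<cdot>\<^sub>m A) = c \<cdot>\<^sub>m transpose_mat A"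
  by (rule eq_matI) auto

lemma dim_mat_exp [simp]: "dim_row (mat_exp M) = dim_row M" "dim_col (mat_exp M) = dim_col M"
  by (simp_all add: mat_exp_def)

lemma mat_exp_transpose:
  assumes "A \<in> carrier_mat n n"
  shows "mat_exp (transpose_mat A) = transpose_mat (mat_exp A)"
  using assms by (intro eq_matI) (auto simp: mat_exp_def transpose_pow_mat[symmetric])

lemma index_mult_transpose_col:
  assumes "K \<in> carrier_mat n 1" "i < n" "j < n"
  shows "(K * transpose_mat K) $$ (i, j) = K $$ (i, 0) * K $$ (j, 0)"
  using assms by (simp add: scalar_prod_def)

text \<open>As the exponential of the transpose is the transposed exponential, the integrand of the
  Gramian is \<open>K * K\<^sup>T\<close> for \<open>K = e\<^bsup>A(t-\<tau>)\<^esup> B\<close>.\<close>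
lemma gramian_eq_integral_outer:
  assumes A: "A \<in> carrier_mat n n" and B: "B \<in> carrier_mat n k"
  shows "gramian A B t s = mat n n (\<lambda>(i,j). integral {s..t} (\<lambda>\<tau>.
      (mat_exp ((t - \<tau>) \<cdot>\<^sub>m A) * B * transpose_mat (mat_exp ((t - \<tau>) \<cdot>\<^sub>m A) * B)) $$ (i, j)))"
proof -
  have "mat_exp ((t - \<tau>) \<cdot>\<^sub>m A) * B * transpose_mat B * mat_exp ((t - \<tau>) \<cdot>\<^sub>m transpose_mat A)
      = mat_exp ((t - \<tau>) \<cdot>\<^sub>m A) * B * transpose_mat (mat_exp ((t - \<tau>) \<cdot>\<^sub>m A) * B)" for \<tau>
  proof -
    let ?E = "mat_exp ((t - \<tau>) \<cdot>\<^sub>m A)"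
    have E: "?E \<in> carrier_mat n n" using A by (simp add: mat_exp_def)
    have "mat_exp ((t - \<tau>) \<cdot>\<^sub>m transpose_mat A) = transpose_mat ?E"
      using mat_exp_transpose[of "(t - \<tau>) \<cdot>\<^sub>m A" n] A by (simp add: transpose_smult_mat)
    moreover have "?E * B * transpose_mat B * transpose_mat ?E = ?E * B * (transpose_mat B * transpose_mat ?E)"
      using E B by (intro assoc_mult_mat) auto
    ultimately show ?thesis by (simp only: transpose_mult[OF E B])
  qed
  then show ?thesis using A by (simp add: gramian_def)
qed

definition block_diag :: "'a :: zero mat \<Rightarrow> 'a mat \<Rightarrow> 'a mat" where
  "block_diag X Y = four_block_mat X (0\<^sub>m (dim_row X) (dim_col Y)) (0\<^sub>m (dim_row Y) (dim_col X)) Y"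

lemma dim_block_diag [simp]:
  "dim_row (block_diag X Y) = dim_row X + dim_row Y" "dim_col (block_diag X Y) = dim_col X + dim_col Y"
  by (simp_all add: block_diag_def)

lemma index_block_diag:
  assumes "i < dim_row X + dim_row Y" "j < dim_col X + dim_col Y"
  shows "block_diag X Y $$ (i, j)
       = (if i < dim_row X then if j < dim_col X then X $$ (i, j) else 0
          else if j < dim_col X then 0 else Y $$ (i - dim_row X, j - dim_col X))"
  using assms by (simp add: block_diag_def)

lemma diag_block_mat_Cons: "diag_block_mat (A # As) = block_diag A (diag_block_mat As)"
  by (simp add: block_diag_def Let_def)

lemma block_diag_carrier:
  assumes X: "X \<in> carrier_mat a b" and Y: "Y \<in> carrier_mat c d"
  shows "block_diag X Y \<in> carrier_mat (a + c) (b + d)"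
  by (rule carrier_matI) (simp_all add: carrier_matD[OF X] carrier_matD[OF Y])

lemma smult_block_diag:
  fixes X Y :: "'a :: semiring_0 mat"
  shows "c \<cdot>\<^sub>m block_diag X Y = block_diag (c \<cdot>\<^sub>m X) (c \<cdot>\<^sub>m Y)"
  by (rule eq_matI) (auto simp: index_block_diag)

lemma transpose_block_diag: "transpose_mat (block_diag X Y) = block_diag (transpose_mat X) (transpose_mat Y)"
  by (rule eq_matI) (auto simp: index_block_diag)

lemma block_diag_one: "block_diag (1\<^sub>m a) (1\<^sub>m b) = 1\<^sub>m (a + b)"
  by (simp add: block_diag_def)

lemma mult_block_diag:
  assumes e1: "dim_col X1 = dim_row X2" and e2: "dim_col Y1 = dim_row Y2"
  shows "block_diag X1 Y1 * block_diag X2 Y2 = block_diag (X1 * X2) (Y1 * Y2)"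
proof -
  let ?a = "dim_row X1" and ?b = "dim_col X1" and ?c = "dim_col X2"
  let ?d = "dim_row Y1" and ?e = "dim_col Y1" and ?f = "dim_col Y2"
  have c1: "X1 \<in> carrier_mat ?a ?b" "0\<^sub>m ?a ?e \<in> carrier_mat ?a ?e" "0\<^sub>m ?d ?b \<in> carrier_mat ?d ?b"
    "Y1 \<in> carrier_mat ?d ?e" by auto
  have c2: "X2 \<in> carrier_mat ?b ?c" "0\<^sub>m ?b ?f \<in> carrier_mat ?b ?f" "0\<^sub>m ?e ?c \<in> carrier_mat ?e ?c"
    "Y2 \<in> carrier_mat ?e ?f" using e1 e2 by (auto intro!: carrier_matI)
  have dX2: "dim_row X2 = ?b" "dim_row Y2 = ?e" using e1 e2 by auto
  have "block_diag X1 Y1 * block_diag X2 Y2 = four_block_mat (X1 * X2 + 0\<^sub>m ?a ?e * 0\<^sub>m ?e ?c)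
      (X1 * 0\<^sub>m ?b ?f + 0\<^sub>m ?a ?e * Y2) (0\<^sub>m ?d ?b * X2 + Y1 * 0\<^sub>m ?e ?c)
      (0\<^sub>m ?d ?b * 0\<^sub>m ?b ?f + Y1 * Y2)"
    unfolding block_diag_def dX2 by (rule mult_four_block_mat[OF c1 c2])
  also have "X1 * X2 + 0\<^sub>m ?a ?e * 0\<^sub>m ?e ?c = X1 * X2"
  proof -
    have z: "0\<^sub>m ?a ?e * 0\<^sub>m ?e ?c = 0\<^sub>m ?a ?c" by (rule left_mult_zero_mat) auto
    show ?thesis unfolding z by (rule right_add_zero_mat) auto
  qed
  also have "X1 * 0\<^sub>m ?b ?f + 0\<^sub>m ?a ?e * Y2 = 0\<^sub>m ?a ?f"
    unfolding right_mult_zero_mat[OF c1(1)] left_mult_zero_mat[OF c2(4)] by (rule left_add_zero_mat) auto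
  also have "0\<^sub>m ?d ?b * X2 + Y1 * 0\<^sub>m ?e ?c = 0\<^sub>m ?d ?c"
    unfolding left_mult_zero_mat[OF c2(1)] right_mult_zero_mat[OF c1(4)] by (rule left_add_zero_mat) auto
  also have "0\<^sub>m ?d ?b * 0\<^sub>m ?b ?f + Y1 * Y2 = Y1 * Y2"
  proof -
    have z: "0\<^sub>m ?d ?b * 0\<^sub>m ?b ?f = 0\<^sub>m ?d ?f" by (rule left_mult_zero_mat) auto
    show ?thesis unfolding z by (rule left_add_zero_mat) (auto simp: dX2)
  qed
  finally show ?thesis unfolding block_diag_def by simp
qed

lemma mat_exp_block_diag:
  assumes X: "X \<in> carrier_mat n n" and Y: "Y \<in> carrier_mat m m"
  shows "mat_exp (block_diag X Y) = block_diag (mat_exp X) (mat_exp Y)"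
proof (rule eq_matI)
  fix i j assume "i < dim_row (block_diag (mat_exp X) (mat_exp Y))"
    and "j < dim_col (block_diag (mat_exp X) (mat_exp Y))"
  then have i: "i < n + m" and j: "j < n + m" using X Y by simp_all
  have "block_diag X Y ^\<^sub>m k = block_diag (X ^\<^sub>m k) (Y ^\<^sub>m k)" for k
    using pow_four_block_mat[OF X Y, of k] X Y unfolding block_diag_def by simp
  then have pow: "(block_diag X Y ^\<^sub>m k) $$ (i, j)
      = (if i < n then if j < n then (X ^\<^sub>m k) $$ (i, j) else 0
         else if j < n then 0 else (Y ^\<^sub>m k) $$ (i - n, j - n))" for k
    using i j X Y by (simp add: index_block_diag)
  have "block_diag (mat_exp X) (mat_exp Y) $$ (i, j)
      = (if i < n then if j < n then mat_exp X $$ (i, j) else 0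
         else if j < n then 0 else mat_exp Y $$ (i - n, j - n))"
    using i j X Y by (simp add: index_block_diag)
  then show "mat_exp (block_diag X Y) $$ (i, j) = block_diag (mat_exp X) (mat_exp Y) $$ (i, j)"
    using i j X Y by (cases "i < n"; cases "j < n") (simp_all add: mat_exp_def pow)
qed (use X Y in simp_all)

lemma gramian_block_diag:
  assumes A1: "A1 \<in> carrier_mat n n" and A2: "A2 \<in> carrier_mat m m"
    and B1: "B1 \<in> carrier_mat n k1" and B2: "B2 \<in> carrier_mat m k2"
  shows "gramian (block_diag A1 A2) (block_diag B1 B2) t s = block_diag (gramian A1 B1 t s) (gramian A2 B2 t s)"
proof -
  define K1 K2 where "K1 \<tau> = mat_exp ((t - \<tau>) \<cdot>\<^sub>m A1) * B1"
    and "K2 \<tau> = mat_exp ((t - \<tau>) \<cdot>\<^sub>m A2) * B2" for \<tau>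
  have K1: "K1 \<tau> \<in> carrier_mat n k1" and K2: "K2 \<tau> \<in> carrier_mat m k2" for \<tau>
    using A1 A2 B1 B2 by (auto simp: K1_def K2_def intro!: carrier_matI)
  have A: "block_diag A1 A2 \<in> carrier_mat (n + m) (n + m)"
    and B: "block_diag B1 B2 \<in> carrier_mat (n + m) (k1 + k2)"
    using A1 A2 B1 B2 by (simp_all add: block_diag_carrier)
  have K: "mat_exp ((t - \<tau>) \<cdot>\<^sub>m block_diag A1 A2) * block_diag B1 B2 = block_diag (K1 \<tau>) (K2 \<tau>)" for \<tau>
    unfolding smult_block_diag K1_def K2_def
    using A1 A2 B1 B2 by (subst mat_exp_block_diag[of _ n _ m]) (auto simp: mult_block_diag)
  have KK: "block_diag (K1 \<tau>) (K2 \<tau>) * transpose_mat (block_diag (K1 \<tau>) (K2 \<tau>))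
      = block_diag (K1 \<tau> * transpose_mat (K1 \<tau>)) (K2 \<tau> * transpose_mat (K2 \<tau>))" for \<tau>
    unfolding transpose_block_diag by (rule mult_block_diag) simp_all
  show ?thesis
  proof (rule eq_matI)
    fix i j assume "i < dim_row (block_diag (gramian A1 B1 t s) (gramian A2 B2 t s))"
      and "j < dim_col (block_diag (gramian A1 B1 t s) (gramian A2 B2 t s))"
    then have i: "i < n + m" and j: "j < n + m" using A1 A2 by (simp_all add: gramian_def)
    have "block_diag (K1 \<tau> * transpose_mat (K1 \<tau>)) (K2 \<tau> * transpose_mat (K2 \<tau>)) $$ (i, j)
        = (if i < n then if j < n then (K1 \<tau> * transpose_mat (K1 \<tau>)) $$ (i, j) else 0
           else if j < n then 0 else (K2 \<tau> * transpose_mat (K2 \<tau>)) $$ (i - n, j - n))" for \<tau>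
      using i j by (simp add: index_block_diag carrier_matD[OF K1[of \<tau>]] carrier_matD[OF K2[of \<tau>]])
    then show "gramian (block_diag A1 A2) (block_diag B1 B2) t s $$ (i, j)
        = block_diag (gramian A1 B1 t s) (gramian A2 B2 t s) $$ (i, j)"
      using i j
      by (cases "i < n"; cases "j < n")
        (simp_all add: gramian_eq_integral_outer[OF A B] gramian_eq_integral_outer[OF A1 B1]
          gramian_eq_integral_outer[OF A2 B2] K KK index_block_diag flip: K1_def K2_def)
  qed (use A1 A2 in \<open>simp_all add: gramian_def\<close>)
qed

lemma det_block_diag:
  fixes X Y :: "'a :: idom mat"
  assumes "X \<in> carrier_mat n n" "Y \<in> carrier_mat m m"
  shows "Determinant.det (block_diag X Y) = Determinant.det X * Determinant.det Y"
  unfolding block_diag_def using assms by (intro det_four_block_mat_upper_right_zero[of _ n _ m]) auto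

lemma det_diag_block_mat:
  fixes As :: "'a :: idom mat list"
  assumes "\<And>A. A \<in> set As \<Longrightarrow> square_mat A"
  shows "Determinant.det (diag_block_mat As) = prod_list (map Determinant.det As)"
  using assms
proof (induction As)
  case (Cons A As)
  let ?D = "diag_block_mat As"
  have "square_mat ?D" using Cons.prems by (intro diag_block_mat_square) auto
  then have "?D \<in> carrier_mat (dim_row ?D) (dim_row ?D)" "A \<in> carrier_mat (dim_row A) (dim_row A)"
    using Cons.prems by (auto intro: carrier_matI)
  then show ?case
    using Cons unfolding diag_block_mat_Cons list.map by (simp add: det_block_diag)
qed simp

lemma inverts_mat_diag_block_mat_map:
  assumes "\<And>x. x \<in> set xs \<Longrightarrow> f x \<in> carrier_mat (d x) (d x) \<and> g x \<in> carrier_mat (d x) (d x)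
             \<and> inverts_mat (f x) (g x)"
  shows "inverts_mat (diag_block_mat (map f xs)) (diag_block_mat (map g xs))"
proof -
  have "diag_block_mat (map f xs) \<in> carrier_mat (sum_list (map d xs)) (sum_list (map d xs))
      \<and> diag_block_mat (map g xs) \<in> carrier_mat (sum_list (map d xs)) (sum_list (map d xs))
      \<and> inverts_mat (diag_block_mat (map f xs)) (diag_block_mat (map g xs))"
    using assms
  proof (induction xs)
    case Nil
    then show ?case by (auto simp: inverts_mat_def)
  next
    case (Cons x xs)
    then have fx: "f x \<in> carrier_mat (d x) (d x)" and gx: "g x \<in> carrier_mat (d x) (d x)"
      and "inverts_mat (f x) (g x)" by auto
    then have fg: "f x * g x = 1\<^sub>m (d x)" by (simp add: inverts_mat_def carrier_matD[OF fx])
    from Cons have IH: "diag_block_mat (map f xs) \<in> carrier_mat (sum_list (map d xs)) (sum_list (map d xs))"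
        "diag_block_mat (map g xs) \<in> carrier_mat (sum_list (map d xs)) (sum_list (map d xs))"
        "inverts_mat (diag_block_mat (map f xs)) (diag_block_mat (map g xs))"
      by simp_all
    then have IH3: "diag_block_mat (map f xs) * diag_block_mat (map g xs) = 1\<^sub>m (sum_list (map d xs))"
      by (simp add: inverts_mat_def carrier_matD[OF IH(1)])
    have "block_diag (f x) (diag_block_mat (map f xs)) * block_diag (g x) (diag_block_mat (map g xs))
        = 1\<^sub>m (d x + sum_list (map d xs))"
      using fx gx IH by (simp add: mult_block_diag fg IH3 block_diag_one)
    moreover have "block_diag (f x) (diag_block_mat (map f xs)) \<in> carrier_mat (d x + sum_list (map d xs)) (d x + sum_list (map d xs))"
      "block_diag (g x) (diag_block_mat (map g xs)) \<in> carrier_mat (d x + sum_list (map d xs)) (d x + sum_list (map d xs))"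
      using fx gx IH by (simp_all add: block_diag_carrier)
    ultimately show ?case
      unfolding list.map diag_block_mat_Cons inverts_mat_def
      by (simp add: carrier_matD[OF fx] carrier_matD[OF IH(1)])
  qed
  then show ?thesis by blast
qed

section \<open>A single Brunovsky block\<close>

text \<open>The Gramian of one Brunovsky block on an interval of length \<open>T\<close>, indexed from the
  bottom: with \<open>x = p - 1 - i\<close>, \<open>y = p - 1 - j\<close> it is \<open>T * D * H * D\<close> for the Hilbert matrix
  \<open>H\<close> and \<open>D = diag (T\<^sup>x / x!)\<close>.\<close>
definition gramian_block :: "nat \<Rightarrow> real \<Rightarrow> real mat" where
  "gramian_block p T = mat p p (\<lambda>(i,j). let x = p - 1 - i; y = p - 1 - j in
     T ^ (x + y + 1) / (real (x + y + 1) * fact x * fact y))"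

lemma dim_gramian_block [simp]:
  "dim_row (gramian_block p T) = p" "dim_col (gramian_block p T) = p"
  unfolding gramian_block_def by (rule dim_row_mat(1)) (rule dim_col_mat(1))

lemma dim_inv_block [simp]: "dim_row (inv_block p t s) = p" "dim_col (inv_block p t s) = p"
  unfolding inv_block_def by (rule dim_row_mat(1)) (rule dim_col_mat(1))

lemma gramian_block_carrier: "gramian_block p T \<in> carrier_mat p p"
  by (rule carrier_matI) simp_all

lemma inv_block_carrier: "inv_block p t s \<in> carrier_mat p p"
  by (rule carrier_matI) simp_all

lemma index_gramian_block:
  assumes "x < p" "y < p"
  shows "gramian_block p T $$ (p - 1 - x, p - 1 - y) = T ^ (x + y + 1) / (real (x + y + 1) * fact x * fact y)"
  using assms by (simp add: gramian_block_def)

lemma index_inv_block: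
  assumes x: "x < p" and y: "y < p"
  shows "inv_block p t s $$ (p - 1 - x, p - 1 - y)
       = fact x * fact y * hilbert_inv_weight p x * hilbert_inv_weight p y
         / (real (x + y + 1) * (t - s) ^ (x + y + 1))"
proof -
  define i j where "i = p - 1 - x" and "j = p - 1 - y"
  have ij: "i < p" "j < p" "p - 1 - i = x" "p - 1 - j = y" using x y by (auto simp: i_def j_def)
  have exps: "2 * p - (i + 1) - (j + 1) + 1 = x + y + 1" "p - (i + 1) = x" "p - (j + 1) = y"
    using x y by (auto simp: i_def j_def)
  have num: "(\<Prod>r=1..p. real (2 * p - (a + 1) - r + 1)) = fact (p - 1 - a + p) / fact (p - 1 - a)"
    if "a < p" for a
  proof -
    have "(\<Prod>r=1..p. real (2 * p - (a + 1) - r + 1)) = (\<Prod>u<p. real (p - 1 - a) + 1 + real u)"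
      by (rule prod.reindex_bij_witness[of _ "\<lambda>u. p - u" "\<lambda>r. p - r"])
        (use that in \<open>auto simp: of_nat_diff\<close>)
    then show ?thesis by (simp only: prod_lessThan_add_eq_fact)
  qed
  have den: "(\<Prod>r\<in>{1..p}-{a + 1}. real r - real (a + 1)) = (-1)^a * fact a * fact (p - 1 - a)"
    if "a < p" for a
  proof -
    have "(\<Prod>r\<in>{1..p}-{a + 1}. real r - real (a + 1)) = (\<Prod>u\<in>{..<p}-{a}. real u - real a)"
      by (rule prod.reindex_bij_witness[of _ "\<lambda>u. u + 1" "\<lambda>r. r - 1"]) auto
    then show ?thesis by (simp only: prod_lessThan_diff_self[OF that])
  qed
  have "inv_block p t s $$ (i, j)
      = fact x * fact y / (real (x + y + 1) * (t - s) ^ (x + y + 1))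
        * ((fact (x + p) / fact x) * (fact (y + p) / fact y)
           / (((-1)^i * fact i * fact x) * ((-1)^j * fact j * fact y)))"
    unfolding inv_block_def index_mat(1)[OF ij(1,2)] split Let_def exps prod.distrib
      num[OF ij(1)] num[OF ij(2)] den[OF ij(1)] den[OF ij(2)] ij(3,4) ..
  also have "\<dots> = fact x * fact y * hilbert_inv_weight p x * hilbert_inv_weight p y
         / (real (x + y + 1) * (t - s) ^ (x + y + 1))"
    by (simp add: hilbert_inv_weight_def i_def j_def field_simps power2_eq_square)
  finally show ?thesis unfolding i_def j_def .
qed

lemma gramian_block_inv_block_term:
  assumes "s < t" and x: "x < p" and y: "y < p" and z: "z < p"
  shows "gramian_block p (t - s) $$ (p - 1 - x, p - 1 - z) * inv_block p t s $$ (p - 1 - z, p - 1 - y)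
       = (t - s) ^ x * fact y * hilbert_inv_weight p y / (fact x * (t - s) ^ y)
         * (hilbert_inv_weight p z / ((real x + real z + 1) * (real y + real z + 1)))"
proof -
  define T a b where "T = t - s" and "a = real (x + z + 1)" and "b = real (z + y + 1)"
  have ab: "T > 0" "a > 0" "b > 0" "(real x + real z + 1) * (real y + real z + 1) = a * b"
    using assms by (auto simp: T_def a_def b_def add_ac)
  have pow: "T ^ (x + z + 1) = T ^ x * T ^ (z + 1)" "T ^ (z + y + 1) = T ^ y * T ^ (z + 1)"
    by (simp_all flip: power_add add: ac_simps)
  have "gramian_block p (t - s) $$ (p - 1 - x, p - 1 - z) * inv_block p t s $$ (p - 1 - z, p - 1 - y)
      = T ^ x * T ^ (z + 1) / (a * fact x * fact z)
        * (fact z * fact y * hilbert_inv_weight p z * hilbert_inv_weight p y / (b * (T ^ y * T ^ (z + 1))))"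
    unfolding index_gramian_block[OF x z] index_inv_block[OF z y]
      T_def[symmetric] pow a_def[symmetric] b_def[symmetric] ..
  also have "\<dots> = T ^ x * fact y * hilbert_inv_weight p y / (fact x * T ^ y)
      * (hilbert_inv_weight p z / (a * b))"
    using ab by (simp add: field_simps)
  finally show ?thesis unfolding ab(4) T_def .
qed

lemma gramian_block_mult_inv_block:
  assumes "s < t"
  shows "gramian_block p (t - s) * inv_block p t s = 1\<^sub>m p"
proof (rule eq_matI)
  fix i j assume "i < dim_row (1\<^sub>m p)" "j < dim_col (1\<^sub>m p)"
  then have ij: "i < p" "j < p" by auto
  define x y where "x = p - 1 - i" and "y = p - 1 - j"
  have xy: "x < p" "y < p" "i = p - 1 - x" "j = p - 1 - y" using ij by (auto simp: x_def y_def)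
  define C where "C = (t - s) ^ x * fact y * hilbert_inv_weight p y / (fact x * (t - s) ^ y)"
  have "(gramian_block p (t - s) * inv_block p t s) $$ (i, j)
      = (\<Sum>k<p. gramian_block p (t - s) $$ (i, k) * inv_block p t s $$ (k, j))"
    using ij by (simp add: scalar_prod_def atLeast0LessThan)
  also have "\<dots> = (\<Sum>z<p. gramian_block p (t - s) $$ (i, p - 1 - z) * inv_block p t s $$ (p - 1 - z, j))"
    by (subst sum.nat_diff_reindex[symmetric]) simp
  also have "\<dots> = C * (\<Sum>z<p. hilbert_inv_weight p z / ((real x + real z + 1) * (real y + real z + 1)))"
    unfolding xy(3,4) sum_distrib_left C_def
    by (intro sum.cong refl gramian_block_inv_block_term[OF assms xy(1,2)]) simp
  also have "\<dots> = (if x = y then C / hilbert_inv_weight p x else 0)"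
    by (simp add: sum_hilbert_inv_weight[OF xy(1,2)])
  also have "\<dots> = 1\<^sub>m p $$ (i, j)"
    using ij xy assms by (auto simp: C_def hilbert_inv_weight_nonzero)
  finally show "(gramian_block p (t - s) * inv_block p t s) $$ (i, j) = 1\<^sub>m p $$ (i, j)" .
qed simp_all

lemma inv_block_mult_gramian_block:
  assumes "s < t"
  shows "inv_block p t s * gramian_block p (t - s) = 1\<^sub>m p"
  by (rule mat_mult_left_right_inverse[OF gramian_block_carrier inv_block_carrier
        gramian_block_mult_inv_block[OF assms]])

lemma mat_delete_gramian_block: "mat_delete (gramian_block (Suc p) T) 0 0 = gramian_block p T"
  by (rule eq_matI) (auto simp: mat_delete_def gramian_block_def)

lemma det_gramian_block_eq_det_Suc:
  assumes "s < t"
  shows "Determinant.det (gramian_block p (t - s))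
       = Determinant.det (gramian_block (Suc p) (t - s)) * inv_block (Suc p) t s $$ (0, 0)"
proof -
  let ?G = "gramian_block (Suc p) (t - s)"
  have "adj_mat ?G = Determinant.det ?G \<cdot>\<^sub>m inv_block (Suc p) t s"
    by (rule adj_mat_eq_det_smult_inverse[OF gramian_block_carrier inv_block_carrier
          gramian_block_mult_inv_block[OF assms]])
  then have "adj_mat ?G $$ (0, 0) = Determinant.det ?G * inv_block (Suc p) t s $$ (0, 0)"
    by simp
  moreover have "adj_mat ?G $$ (0, 0) = Determinant.det (gramian_block p (t - s))"
    by (simp add: adj_mat_def cofactor_def mat_delete_gramian_block)
  ultimately show ?thesis by simp
qed

lemma prod_fact_ratio_Suc:
  "(\<Prod>u<Suc p. fact u / fact (Suc p + u) :: real)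
     = (\<Prod>u<p. fact u / fact (p + u)) * (fact p ^ 2 / (fact (2 * p) * fact (2 * p + 1)))"
proof -
  define N D where "N = (\<Prod>u<p. fact u :: real)" and "D = (\<Prod>u<p. fact (p + u) :: real)"
  have "fact p * (\<Prod>u<Suc p. fact (Suc p + u) :: real) = (\<Prod>u<Suc (Suc p). fact (p + u))"
    by (simp only: prod.lessThan_Suc_shift add_0_right add_Suc_right add_Suc)
  also have "\<dots> = D * fact (p + p) * fact (p + Suc p)"
    by (simp only: prod.lessThan_Suc D_def)
  also have "\<dots> = D * (fact (2 * p) * fact (2 * p + 1))"
    by (simp only: mult_2 add_Suc_right Suc_eq_plus1 add.assoc mult.assoc)
  finally have den: "(\<Prod>u<Suc p. fact (Suc p + u) :: real) = D * (fact (2 * p) * fact (2 * p + 1)) / fact p"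
    by (simp add: field_simps del: fact_Suc)
  have "D > 0" by (simp add: D_def prod_pos)
  have "(\<Prod>u<Suc p. fact u / fact (Suc p + u) :: real) = N * fact p / (\<Prod>u<Suc p. fact (Suc p + u))"
    by (simp only: prod_dividef prod.lessThan_Suc N_def)
  also have "\<dots> = N / D * (fact p ^ 2 / (fact (2 * p) * fact (2 * p + 1)))"
    unfolding den using \<open>D > 0\<close> by (simp add: field_simps power2_eq_square del: fact_Suc)
  also have "N / D = (\<Prod>u<p. fact u / fact (p + u))"
    by (simp only: N_def D_def prod_dividef)
  finally show ?thesis .
qed

lemma det_gramian_block:
  assumes "s < t"
  shows "Determinant.det (gramian_block p (t - s)) = (t - s) ^ p\<^sup>2 * (\<Prod>u<p. fact u / fact (p + u))"
proof (induction p)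
  case 0
  have "gramian_block 0 (t - s) \<in> carrier_mat 0 0" by (rule gramian_block_carrier)
  then show ?case by simp
next
  case (Suc p)
  define T F G a where "T = t - s" and "F = (fact (2 * p + 1) :: real)"
    and "G = (fact (2 * p) :: real)" and "a = real (2 * p + 1)"
  have pos: "T > 0" "G > 0" "a > 0" using assms by (simp_all add: T_def G_def a_def)
  have FG: "F = a * G" by (simp add: F_def G_def a_def)
  have w: "hilbert_inv_weight (Suc p) p = F / fact p ^ 2"
    by (simp add: hilbert_inv_weight_def F_def flip: mult_2)
  have "inv_block (Suc p) t s $$ (0, 0) = fact p * fact p * (F / fact p ^ 2) * (F / fact p ^ 2) / (a * T ^ (2 * p + 1))"
    using index_inv_block[of p "Suc p" p t s] unfolding w by (simp add: a_def T_def flip: mult_2)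
  also have "\<dots> = F * G / (fact p ^ 2 * T ^ (2 * p + 1))"
    using pos unfolding FG by (simp add: field_simps power2_eq_square)
  finally have corner: "inv_block (Suc p) t s $$ (0, 0) = F * G / (fact p ^ 2 * T ^ (2 * p + 1))" .
  have "Determinant.det (gramian_block (Suc p) T)
      = Determinant.det (gramian_block p T) * (T ^ (2 * p + 1) * (fact p ^ 2 / (G * F)))"
    using det_gramian_block_eq_det_Suc[OF assms, of p] pos unfolding corner T_def[symmetric] FG
    by (simp add: field_simps)
  also have "\<dots> = T ^ (p\<^sup>2 + (2 * p + 1)) * (\<Prod>u<Suc p. fact u / fact (Suc p + u))"
    unfolding Suc[folded T_def] prod_fact_ratio_Suc power_add F_def G_def by (simp only: ac_simps)
  also have "p\<^sup>2 + (2 * p + 1) = (Suc p)\<^sup>2" by (simp add: power2_eq_square)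
  finally show ?case unfolding T_def .
qed

lemma prod_Gamma_ratio_eq_fact:
  "(\<Prod>r=1..p. Gamma (real r) / Gamma (real (p + r))) = (\<Prod>u<p. fact u / fact (p + u))"
proof (rule prod.reindex_bij_witness[of _ "\<lambda>u. u + 1" "\<lambda>r. r - 1"])
  fix r assume "r \<in> {1..p}"
  then have "real r = 1 + real (r - 1)" "real (p + r) = 1 + real (p + (r - 1))"
    by (auto simp: of_nat_diff)
  then show "fact (r - 1) / fact (p + (r - 1)) = Gamma (real r) / Gamma (real (p + r))"
    by (simp only: Gamma_fact)
qed auto

lemma dim_shift_block [simp]: "dim_row (shift_block p) = p" "dim_col (shift_block p) = p"
  by (simp_all add: shift_block_def)

lemma index_shift_block: "i < p \<Longrightarrow> j < p \<Longrightarrow> shift_block p $$ (i, j) = (if j = i + 1 then 1 else 0)"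
  by (simp add: shift_block_def)

lemma shift_block_carrier: "shift_block p \<in> carrier_mat p p"
  by (rule carrier_matI) simp_all

lemma last_basis_col_carrier: "last_basis_col p \<in> carrier_mat p 1"
  by (simp add: last_basis_col_def)

lemma shift_block_smult_pow:
  "(c \<cdot>\<^sub>m shift_block p) ^\<^sub>m k = mat p p (\<lambda>(i,j). if j = i + k then c ^ k else 0)"
proof (induction k)
  case 0
  show ?case by (rule eq_matI) (auto simp: shift_block_def)
next
  case (Suc k)
  show ?case
  proof (rule eq_matI)
    fix i j assume "i < dim_row (mat p p (\<lambda>(i,j). if j = i + Suc k then c ^ Suc k else 0))"
      and "j < dim_col (mat p p (\<lambda>(i,j). if j = i + Suc k then c ^ Suc k else (0::real)))"
    then have i: "i < p" and j: "j < p" by auto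
    have "((c \<cdot>\<^sub>m shift_block p) ^\<^sub>m Suc k) $$ (i, j)
        = (\<Sum>l<p. (if l = i + k then c ^ k else 0) * (c * (if j = l + 1 then 1 else 0)))"
      using i j by (simp add: Suc.IH index_shift_block scalar_prod_def atLeast0LessThan)
    also have "\<dots> = (\<Sum>l<p. if l = i + k then c ^ k * (c * (if j = i + k + 1 then 1 else 0)) else 0)"
      by (intro sum.cong) auto
    also have "\<dots> = (if j = i + Suc k then c ^ Suc k else 0)"
      using j by (auto simp: sum.delta)
    finally show "((c \<cdot>\<^sub>m shift_block p) ^\<^sub>m Suc k) $$ (i, j)
        = mat p p (\<lambda>(i,j). if j = i + Suc k then c ^ Suc k else 0) $$ (i, j)"
      using i j by simp
  qed simp_all
qed

lemma mat_exp_shift_block: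
  "mat_exp (c \<cdot>\<^sub>m shift_block p) = mat p p (\<lambda>(i,j). if i \<le> j then c ^ (j - i) / fact (j - i) else 0)"
proof (rule eq_matI)
  fix i j assume "i < dim_row (mat p p (\<lambda>(i,j). if i \<le> j then c ^ (j - i) / fact (j - i) else (0::real)))"
    and "j < dim_col (mat p p (\<lambda>(i,j). if i \<le> j then c ^ (j - i) / fact (j - i) else (0::real)))"
  then have i: "i < p" and j: "j < p" by auto
  have "((c \<cdot>\<^sub>m shift_block p) ^\<^sub>m k) $$ (i, j) / fact k
      = (if k = j - i then if i \<le> j then c ^ k / fact k else 0 else 0)" for k
    using i j by (auto simp: shift_block_smult_pow)
  then have "(\<lambda>k. ((c \<cdot>\<^sub>m shift_block p) ^\<^sub>m k) $$ (i, j) / fact k)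
      sums (if i \<le> j then c ^ (j - i) / fact (j - i) else 0)"
    using sums_single[of "j - i" "\<lambda>k. if i \<le> j then c ^ k / fact k else 0"] by simp
  then show "mat_exp (c \<cdot>\<^sub>m shift_block p) $$ (i, j)
      = mat p p (\<lambda>(i,j). if i \<le> j then c ^ (j - i) / fact (j - i) else 0) $$ (i, j)"
    using i j by (simp add: mat_exp_def sums_iff)
qed simp_all

lemma mat_exp_shift_block_mult_last_basis_col:
  assumes "i < p"
  shows "(mat_exp (c \<cdot>\<^sub>m shift_block p) * last_basis_col p) $$ (i, 0) = c ^ (p - 1 - i) / fact (p - 1 - i)"
proof -
  let ?E = "mat_exp (c \<cdot>\<^sub>m shift_block p)"
  have "(?E * last_basis_col p) $$ (i, 0) = (\<Sum>l<p. ?E $$ (i, l) * (if l = p - 1 then 1 else 0))"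
    using assms by (simp add: last_basis_col_def scalar_prod_def atLeast0LessThan)
  also have "\<dots> = (\<Sum>l<p. if l = p - 1 then ?E $$ (i, l) else 0)"
    by (intro sum.cong) auto
  also have "\<dots> = ?E $$ (i, p - 1)"
    using assms by (simp add: sum.delta)
  also have "\<dots> = c ^ (p - 1 - i) / fact (p - 1 - i)"
    using assms by (simp add: mat_exp_shift_block)
  finally show ?thesis .
qed

lemma has_integral_power_diff:
  assumes "s \<le> t"
  shows "((\<lambda>\<tau>. (t - \<tau>) ^ n) has_integral (t - s) ^ (n + 1) / real (n + 1)) {s..t}"
proof -
  let ?F = "\<lambda>\<tau>. - ((t - \<tau>) ^ (n + 1)) / real (n + 1)"
  have "(?F has_real_derivative (t - \<tau>) ^ n) (at \<tau> within {s..t})" for \<tau>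
    by (rule derivative_eq_intros refl | simp)+
  then have "((\<lambda>\<tau>. (t - \<tau>) ^ n) has_integral (?F t - ?F s)) {s..t}"
    by (intro fundamental_theorem_of_calculus[OF assms])
      (simp add: has_real_derivative_iff_has_vector_derivative)
  then show ?thesis by simp
qed

lemma gramian_shift_block:
  assumes "s < t"
  shows "gramian (shift_block p) (last_basis_col p) t s = gramian_block p (t - s)"
proof (rule eq_matI)
  fix i j assume "i < dim_row (gramian_block p (t - s))" "j < dim_col (gramian_block p (t - s))"
  then have i: "i < p" and j: "j < p" by auto
  define x y where "x = p - 1 - i" and "y = p - 1 - j"
  let ?K = "\<lambda>\<tau>. mat_exp ((t - \<tau>) \<cdot>\<^sub>m shift_block p) * last_basis_col p"
  have K: "?K \<tau> \<in> carrier_mat p 1" for \<tau>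
    using last_basis_col_carrier by (intro carrier_matI) auto
  have "(?K \<tau> * transpose_mat (?K \<tau>)) $$ (i, j) = (t - \<tau>) ^ (x + y) * (1 / (fact x * fact y))" for \<tau>
    unfolding index_mult_transpose_col[OF K i j] mat_exp_shift_block_mult_last_basis_col[OF i]
      mat_exp_shift_block_mult_last_basis_col[OF j] x_def[symmetric] y_def[symmetric]
    by (simp add: power_add)
  then have "gramian (shift_block p) (last_basis_col p) t s $$ (i, j)
      = integral {s..t} (\<lambda>\<tau>. (t - \<tau>) ^ (x + y) * (1 / (fact x * fact y)))"
    using i j by (simp add: gramian_eq_integral_outer[OF shift_block_carrier last_basis_col_carrier])
  also have "\<dots> = (t - s) ^ (x + y + 1) / real (x + y + 1) * (1 / (fact x * fact y))"
    using assms by (intro integral_unique has_integral_mult_left has_integral_power_diff) simp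
  also have "\<dots> = gramian_block p (t - s) $$ (i, j)"
  proof -
    have "i = p - 1 - x" "j = p - 1 - y" "x < p" "y < p" using i j by (auto simp: x_def y_def)
    then show ?thesis using index_gramian_block[of x p y "t - s"] by simp
  qed
  finally show "gramian (shift_block p) (last_basis_col p) t s $$ (i, j) = gramian_block p (t - s) $$ (i, j)" .
qed (simp_all add: gramian_def)

section \<open>The Brunovsky pair\<close>

lemma brun_A_Cons: "brun_A (p # ps) = block_diag (shift_block p) (brun_A ps)"
  unfolding brun_A_def list.map by (rule diag_block_mat_Cons)

lemma brun_B_Cons: "brun_B (p # ps) = block_diag (last_basis_col p) (brun_B ps)"
  unfolding brun_B_def list.map by (rule diag_block_mat_Cons)

lemma brun_A_carrier: "brun_A ps \<in> carrier_mat (sum_list ps) (sum_list ps)"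
proof (induction ps)
  case (Cons p ps)
  then show ?case unfolding brun_A_Cons using shift_block_carrier by (simp add: block_diag_carrier)
qed (simp add: brun_A_def)

lemma brun_B_carrier: "brun_B ps \<in> carrier_mat (sum_list ps) (length ps)"
proof (induction ps)
  case (Cons p ps)
  have "block_diag (last_basis_col p) (brun_B ps) \<in> carrier_mat (p + sum_list ps) (1 + length ps)"
    by (rule block_diag_carrier[OF last_basis_col_carrier Cons.IH])
  then show ?case by (simp add: brun_B_Cons)
qed (simp add: brun_B_def)

lemma gramian_brunovsky:
  assumes "s < t"
  shows "gramian (brun_A ps) (brun_B ps) t s = diag_block_mat (map (\<lambda>p. gramian_block p (t - s)) ps)"
proof (induction ps)
  case Nil
  show ?case by (rule eq_matI) (simp_all add: brun_A_def gramian_def)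
next
  case (Cons p ps)
  then show ?case
    unfolding brun_A_Cons brun_B_Cons list.map diag_block_mat_Cons
      gramian_block_diag[OF shift_block_carrier brun_A_carrier last_basis_col_carrier brun_B_carrier]
      gramian_shift_block[OF assms] by simp
qed

lemma inverts_mat_diag_gramian_blocks:
  assumes "s < t"
  shows "inverts_mat (diag_block_mat (map (\<lambda>p. gramian_block p (t - s)) ps))
           (diag_block_mat (map (\<lambda>p. inv_block p t s) ps))"
    and "inverts_mat (diag_block_mat (map (\<lambda>p. inv_block p t s) ps))
           (diag_block_mat (map (\<lambda>p. gramian_block p (t - s)) ps))"
  by (rule inverts_mat_diag_block_mat_map[where d = id],
      simp add: inverts_mat_def gramian_block_carrier inv_block_carrier
        gramian_block_mult_inv_block[OF assms] inv_block_mult_gramian_block[OF assms])+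

lemma det_diag_gramian_blocks:
  assumes "s < t"
  shows "Determinant.det (diag_block_mat (map (\<lambda>p. gramian_block p (t - s)) ps))
       = (\<Prod>k<length ps. (t - s) ^ ((ps ! k)\<^sup>2)
            * (\<Prod>r=1..ps ! k. Gamma (real r) / Gamma (real (ps ! k + r))))"
proof -
  have det_block: "Determinant.det (gramian_block p (t - s))
      = (t - s) ^ p\<^sup>2 * (\<Prod>r=1..p. Gamma (real r) / Gamma (real (p + r)))" for p
    unfolding det_gramian_block[OF assms] prod_Gamma_ratio_eq_fact ..
  have "Determinant.det (diag_block_mat (map (\<lambda>p. gramian_block p (t - s)) ps))
      = prod_list (map (\<lambda>p. Determinant.det (gramian_block p (t - s))) ps)"
    by (subst det_diag_block_mat) (auto simp: o_def)
  then show ?thesis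
    unfolding det_block by (simp add: prod.list_conv_set_nth atLeast0LessThan)
qed

theorem theorem1:
  fixes ps :: "nat list" and s t :: real
  assumes "length ps \<ge> 1"
    and "\<forall>p\<in>set ps. p > 0"
    and "s < t"
  shows "\<exists>Ms. length Ms = length ps
     \<and> (\<forall>k<length ps. Ms ! k \<in> carrier_mat (ps ! k) (ps ! k))
     \<and> gramian (brun_A ps) (brun_B ps) t s = diag_block_mat Ms
     \<and> Determinant.det (gramian (brun_A ps) (brun_B ps) t s)
         = (\<Prod>k<length ps. (t - s) ^ ((ps ! k)\<^sup>2)
              * (\<Prod>r=1..ps ! k. Gamma (real r) / Gamma (real (ps ! k + r))))
     \<and> invertible_mat (gramian (brun_A ps) (brun_B ps) t s)
     \<and> inverts_mat (gramian (brun_A ps) (brun_B ps) t s)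
                   (diag_block_mat (map (\<lambda>p. inv_block p t s) ps))
     \<and> inverts_mat (diag_block_mat (map (\<lambda>p. inv_block p t s) ps))
                   (gramian (brun_A ps) (brun_B ps) t s)
     \<and> (\<forall>k<length ps. inverts_mat (Ms ! k) (inv_block (ps ! k) t s)
                      \<and> inverts_mat (inv_block (ps ! k) t s) (Ms ! k))"
proof -
  let ?Ms = "map (\<lambda>p. gramian_block p (t - s)) ps"
  note inv = inverts_mat_diag_gramian_blocks[OF \<open>s < t\<close>, of ps]
  have "square_mat (diag_block_mat ?Ms)"
    by (rule diag_block_mat_square) simp
  then have "invertible_mat (diag_block_mat ?Ms)"
    using inv by (auto simp: invertible_mat_def)
  moreover have "inverts_mat (gramian_block p (t - s)) (inv_block p t s)
      \<and> inverts_mat (inv_block p t s) (gramian_block p (t - s))" for p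
    using gramian_block_mult_inv_block[OF \<open>s < t\<close>] inv_block_mult_gramian_block[OF \<open>s < t\<close>]
    by (simp add: inverts_mat_def)
  ultimately show ?thesis
    using gramian_brunovsky[OF \<open>s < t\<close>] inv det_diag_gramian_blocks[OF \<open>s < t\<close>, of ps]
    by (intro exI[of _ ?Ms]) (simp add: gramian_block_carrier)
qed

end
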